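(* Let $X$ be an isotropic Lévy process in $\mathbb{R}^d$, $d\ge1$, with characteristic exponent $\xi\mapsto\psi(|\xi|)$, where $\psi(|\xi|)=a|\xi|^2+\int_{\mathbb{R}^d}(1-e^{i\xi\cdot x})\nu(dx)$ with $a\ge0$ and $\nu$ a Lévy measure. Suppose $\psi$ is differentiable on $(0,\infty)$ and that $g(\lambda)=\psi(\lambda)-\frac\lambda2\psi'(\lambda)$ varies regularly at $0$ (at $\infty$, respectively) with index $2\gamma$, where $\gamma\ge0$. Assume further that $a=0$ if $g$ varies regularly at $\infty$ with index $2\gamma\in[0,2)$. Then $\psi$ varies regularly at $0$ (at $\infty$, respectively) with index $2(1\wedge\gamma)$.
   Context: $X$ is isotropic with characteristic exponent $\xi\mapsto\psi(|\xi|)$ if $\mathbb{E}[e^{i\xi\cdot X_t}]=e^{-t\psi(|\xi|)}$. A function $\ell:(0,\infty)\to(0,\infty)$ varies regularly at $\infty$ (at $0$) with index $\alpha$ if $\ell(\lambda u)/\ell(u)\to\lambda^\alpha$ as $u\to\infty$ ($u\to0$) for every $\lambda>0$. $1\wedge\gamma=\min\{1,\gamma\}$. *)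

theory Defs
  imports "HOL-Analysis.Analysis"
begin

definition regvar_at_top :: "(real \<Rightarrow> real) \<Rightarrow> real \<Rightarrow> bool" where
  "regvar_at_top l \<alpha> \<longleftrightarrow> (\<forall>u>0. l u > 0) \<and>
     (\<forall>c>0. ((\<lambda>u. l (c * u) / l u) \<longlongrightarrow> c powr \<alpha>) at_top)"

definition regvar_at_0 :: "(real \<Rightarrow> real) \<Rightarrow> real \<Rightarrow> bool" where
  "regvar_at_0 l \<alpha> \<longleftrightarrow> (\<forall>u>0. l u > 0) \<and>
     (\<forall>c>0. ((\<lambda>u. l (c * u) / l u) \<longlongrightarrow> c powr \<alpha>) (at_right 0))"

definition isotropic_levy_measure :: "(real ^ 'n) measure \<Rightarrow> bool" where
  "isotropic_levy_measure \<nu> \<longleftrightarrow>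
     sets \<nu> = sets borel \<and> emeasure \<nu> {0} = 0 \<and>
     (\<integral>\<^sup>+ x. ennreal (min 1 (norm x ^ 2)) \<partial>\<nu>) < \<infinity> \<and>
     (\<forall>T. orthogonal_transformation T \<longrightarrow> distr \<nu> borel T = \<nu>)"

end

theory Submission
  imports Defs "HOL-Real_Asymp.Real_Asymp"
begin

text \<open>Put \<open>h r = \<psi> r / r\<^sup>2\<close>. Then \<open>h' r = - f r / r\<close> with \<open>f r = 2 g r / r\<^sup>2\<close>, so \<open>h\<close> is
  decreasing and \<open>f\<close> varies regularly with index \<open>2\<gamma> - 2\<close>. Comparing derivatives, \<open>h (c r) - \<kappa> h r\<close>
  is monotone wherever \<open>f (c r) \<le> \<kappa> f r\<close>; hence if \<open>h\<close> tends to \<open>0\<close> at \<open>\<infinity>\<close> or to \<open>\<infinity>\<close> at \<open>0\<close>, it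
  inherits the index \<open>2\<gamma> - 2\<close> of \<open>f\<close> (a Karamata-type argument), and monotonicity of \<open>h\<close> forces
  this index to be \<open>\<le> 0\<close>. Otherwise \<open>h\<close> has a finite positive limit and index \<open>0\<close>: at \<open>0\<close> this
  needs \<open>\<gamma> \<ge> 1\<close>, since for \<open>\<gamma> < 1\<close> the integral of \<open>f r / r\<close> diverges; at \<open>\<infinity>\<close> it is excluded
  for \<open>\<gamma> < 1\<close> because then \<open>a = 0\<close> and \<open>\<psi> r / r\<^sup>2 \<rightarrow> 0\<close> by dominated convergence.\<close>

lemma antiderivative_strict_antimono:
  fixes H f :: "real \<Rightarrow> real"
  assumes H': "\<And>r. r > 0 \<Longrightarrow> (H has_real_derivative - f r / r) (at r)"
    and f_pos: "\<And>r. r > 0 \<Longrightarrow> f r > 0"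
    and "0 < s" "s < t"
  shows "H t < H s"
proof (rule DERIV_neg_imp_decreasing[OF \<open>s < t\<close>])
  fix x assume "s \<le> x" "x \<le> t"
  with \<open>0 < s\<close> have "x > 0" by linarith
  then show "\<exists>y. (H has_real_derivative y) (at x) \<and> y < 0"
    using H' f_pos by (intro exI conjI) (auto simp: divide_pos_pos)
qed

lemma dilation_difference_mono:
  fixes H f :: "real \<Rightarrow> real"
  assumes H': "\<And>r. r > 0 \<Longrightarrow> (H has_real_derivative - f r / r) (at r)"
    and "c > 0" "0 < s" "s \<le> t"
    and f_dil: "\<And>x. s \<le> x \<Longrightarrow> x \<le> t \<Longrightarrow> f (c * x) \<le> \<kappa> * f x"
  shows "H (c * s) - \<kappa> * H s \<le> H (c * t) - \<kappa> * H t"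
proof (rule DERIV_nonneg_imp_nondecreasing[OF \<open>s \<le> t\<close>])
  fix x assume x: "s \<le> x" "x \<le> t"
  with \<open>0 < s\<close> have "x > 0" by linarith
  have "((\<lambda>x. H (c * x)) has_real_derivative - f (c * x) / (c * x) * c) (at x)"
    using DERIV_chain2[OF H'[of "c * x"] DERIV_cmult_Id[of c x]] \<open>c > 0\<close> \<open>x > 0\<close>
    by (simp add: mult.commute)
  then have "((\<lambda>x. H (c * x) - \<kappa> * H x) has_real_derivative
      - f (c * x) / (c * x) * c - \<kappa> * (- f x / x)) (at x)"
    by (intro DERIV_diff DERIV_cmult H' \<open>x > 0\<close>)
  moreover have "- f (c * x) / (c * x) * c - \<kappa> * (- f x / x) = (\<kappa> * f x - f (c * x)) / x"
    using \<open>c > 0\<close> \<open>x > 0\<close> by (simp add: field_simps)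
  moreover have "(\<kappa> * f x - f (c * x)) / x \<ge> 0"
    using f_dil[OF x] \<open>x > 0\<close> by simp
  ultimately show "\<exists>y. ((\<lambda>x. H (c * x) - \<kappa> * H x) has_real_derivative y) (at x) \<and> 0 \<le> y"
    by metis
qed

lemma eventually_dilation_le_at_top:
  fixes H f :: "real \<Rightarrow> real"
  assumes H': "\<And>r. r > 0 \<Longrightarrow> (H has_real_derivative - f r / r) (at r)"
    and H_lim: "(H \<longlongrightarrow> 0) at_top" and "c > 0"
    and f_dil: "eventually (\<lambda>t. f (c * t) \<le> \<kappa> * f t) at_top"
  shows "eventually (\<lambda>u. H (c * u) \<le> \<kappa> * H u) at_top"
proof -
  obtain U where U: "U > 0" "\<And>t. t \<ge> U \<Longrightarrow> f (c * t) \<le> \<kappa> * f t"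
    using f_dil unfolding eventually_at_top_linorder by (metis gt_ex less_max_iff_disj max.bounded_iff)
  have "((\<lambda>t. H (c * t)) \<longlongrightarrow> 0) at_top"
    using filterlim_compose[OF H_lim filterlim_tendsto_pos_mult_at_top[OF tendsto_const \<open>c > 0\<close> filterlim_ident]] .
  then have lim: "((\<lambda>t. H (c * t) - \<kappa> * H t) \<longlongrightarrow> 0) at_top"
    using tendsto_diff[OF _ tendsto_mult_right_zero[OF H_lim]] by fastforce
  show ?thesis
    using eventually_ge_at_top[of U]
  proof eventually_elim
    case (elim u)
    have "H (c * u) - \<kappa> * H u \<le> 0"
    proof (rule tendsto_le[OF trivial_limit_at_top_linorder lim tendsto_const])
      show "eventually (\<lambda>t. H (c * u) - \<kappa> * H u \<le> H (c * t) - \<kappa> * H t) at_top"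
        using eventually_ge_at_top[of u]
        by eventually_elim (use elim U in \<open>auto intro!: dilation_difference_mono[OF H' \<open>c > 0\<close>]\<close>)
    qed
    then show ?case by simp
  qed
qed

lemma antiderivative_dilation_tendsto_at_top:
  fixes H f :: "real \<Rightarrow> real"
  assumes H': "\<And>r. r > 0 \<Longrightarrow> (H has_real_derivative - f r / r) (at r)"
    and f_pos: "\<And>r. r > 0 \<Longrightarrow> f r > 0" and H_pos: "\<And>r. r > 0 \<Longrightarrow> H r > 0"
    and H_lim: "(H \<longlongrightarrow> 0) at_top" and "c > 0"
    and f_ratio: "((\<lambda>u. f (c * u) / f u) \<longlongrightarrow> p) at_top"
  shows "((\<lambda>u. H (c * u) / H u) \<longlongrightarrow> p) at_top"
proof (rule order_tendstoI)
  fix b assume "b > p"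
  define \<kappa> where "\<kappa> = (p + b) / 2"
  have "p < \<kappa>" "\<kappa> < b" using \<open>b > p\<close> by (auto simp: \<kappa>_def)
  have "eventually (\<lambda>t. f (c * t) \<le> \<kappa> * f t) at_top"
    using order_tendstoD(2)[OF f_ratio \<open>p < \<kappa>\<close>] eventually_gt_at_top[of 0]
    by eventually_elim (auto simp: divide_less_eq f_pos)
  with H' H_lim \<open>c > 0\<close> have "eventually (\<lambda>u. H (c * u) \<le> \<kappa> * H u) at_top"
    by (rule eventually_dilation_le_at_top)
  then show "eventually (\<lambda>u. H (c * u) / H u < b) at_top"
    using eventually_gt_at_top[of 0]
  proof eventually_elim
    case (elim u)
    then have "H (c * u) / H u \<le> \<kappa>" by (simp add: divide_le_eq H_pos)
    with \<open>\<kappa> < b\<close> show ?case by linarith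
  qed
next
  fix b assume "b < p"
  define \<kappa> where "\<kappa> = (p + b) / 2"
  have "\<kappa> < p" "b < \<kappa>" using \<open>b < p\<close> by (auto simp: \<kappa>_def)
  have "eventually (\<lambda>t. - f (c * t) \<le> \<kappa> * - f t) at_top"
    using order_tendstoD(1)[OF f_ratio \<open>\<kappa> < p\<close>] eventually_gt_at_top[of 0]
    by eventually_elim (auto simp: less_divide_eq f_pos)
  moreover have "((\<lambda>r. - H r) has_real_derivative - (- f r) / r) (at r)" if "r > 0" for r
    using DERIV_minus[OF H'[OF that]] by simp
  moreover have "((\<lambda>r. - H r) \<longlongrightarrow> 0) at_top"
    using tendsto_minus[OF H_lim] by simp
  ultimately have "eventually (\<lambda>u. - H (c * u) \<le> \<kappa> * - H u) at_top"
    using eventually_dilation_le_at_top[where H = "\<lambda>r. - H r" and f = "\<lambda>r. - f r"] \<open>c > 0\<close>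
    by blast
  then show "eventually (\<lambda>u. H (c * u) / H u > b) at_top"
    using eventually_gt_at_top[of 0]
  proof eventually_elim
    case (elim u)
    then have "\<kappa> \<le> H (c * u) / H u" by (simp add: le_divide_eq H_pos)
    with \<open>b < \<kappa>\<close> show ?case by linarith
  qed
qed

lemma filterlim_mult_left_at_right_0:
  "c > 0 \<Longrightarrow> filterlim (\<lambda>x. c * x) (at_right 0) (at_right (0::real))"
  by (intro tendsto_imp_filterlim_at_right tendsto_mult_right_zero tendsto_ident_at)
    (auto simp: eventually_at_filter)

lemma dilation_difference_bounded_at_0:
  fixes H f :: "real \<Rightarrow> real"
  assumes H': "\<And>r. r > 0 \<Longrightarrow> (H has_real_derivative - f r / r) (at r)" and "c > 0"
    and f_dil: "eventually (\<lambda>t. f (c * t) \<le> \<kappa> * f t) (at_right 0)"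
  obtains U where "U > 0" "\<And>u. 0 < u \<Longrightarrow> u \<le> U \<Longrightarrow> H (c * u) - \<kappa> * H u \<le> H (c * U) - \<kappa> * H U"
proof -
  obtain V where "V > 0" and V: "\<And>t. 0 < t \<Longrightarrow> t < V \<Longrightarrow> f (c * t) \<le> \<kappa> * f t"
    using f_dil unfolding eventually_at_right_field by auto
  show ?thesis
  proof
    show "V / 2 > 0" using \<open>V > 0\<close> by simp
    fix u assume "0 < u" "u \<le> V / 2"
    then show "H (c * u) - \<kappa> * H u \<le> H (c * (V / 2)) - \<kappa> * H (V / 2)"
      by (intro dilation_difference_mono[OF H' \<open>c > 0\<close>] V) auto
  qed
qed

lemma eventually_divide_less_if_excess_bounded:
  fixes G H :: "real \<Rightarrow> real"
  assumes H_lim: "filterlim H at_top F" and "\<kappa> < b"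
    and excess: "eventually (\<lambda>u. G u - \<kappa> * H u \<le> A) F"
  shows "eventually (\<lambda>u. G u / H u < b) F"
  using excess H_lim[unfolded filterlim_at_top_dense, rule_format, of "\<bar>A\<bar> / (b - \<kappa>)"]
proof eventually_elim
  case (elim u)
  have "0 \<le> \<bar>A\<bar> / (b - \<kappa>)" using \<open>\<kappa> < b\<close> by simp
  with elim have "H u > 0" by linarith
  from elim \<open>\<kappa> < b\<close> have "\<bar>A\<bar> < (b - \<kappa>) * H u"
    by (simp add: divide_less_eq mult.commute)
  with elim \<open>H u > 0\<close> show ?case by (simp add: divide_less_eq algebra_simps)
qed

lemma antiderivative_dilation_tendsto_at_0:
  fixes H f :: "real \<Rightarrow> real"
  assumes H': "\<And>r. r > 0 \<Longrightarrow> (H has_real_derivative - f r / r) (at r)"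
    and f_pos: "\<And>r. r > 0 \<Longrightarrow> f r > 0"
    and H_lim: "filterlim H at_top (at_right 0)" and "c > 0"
    and f_ratio: "((\<lambda>u. f (c * u) / f u) \<longlongrightarrow> p) (at_right 0)"
  shows "((\<lambda>u. H (c * u) / H u) \<longlongrightarrow> p) (at_right 0)"
proof (rule order_tendstoI)
  fix b assume "b > p"
  define \<kappa> where "\<kappa> = (p + b) / 2"
  have "p < \<kappa>" "\<kappa> < b" using \<open>b > p\<close> by (auto simp: \<kappa>_def)
  have "eventually (\<lambda>t. f (c * t) \<le> \<kappa> * f t) (at_right 0)"
    using order_tendstoD(2)[OF f_ratio \<open>p < \<kappa>\<close>] eventually_at_right_less
    by eventually_elim (auto simp: divide_less_eq f_pos)
  then obtain U where "U > 0"
    and U: "\<And>u. 0 < u \<Longrightarrow> u \<le> U \<Longrightarrow> H (c * u) - \<kappa> * H u \<le> H (c * U) - \<kappa> * H U"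
    using dilation_difference_bounded_at_0[OF H' \<open>c > 0\<close>] by blast
  have "eventually (\<lambda>u. H (c * u) - \<kappa> * H u \<le> H (c * U) - \<kappa> * H U) (at_right 0)"
    using eventually_at_right_real[OF \<open>U > 0\<close>] by eventually_elim (auto intro: U)
  with H_lim \<open>\<kappa> < b\<close> show "eventually (\<lambda>u. H (c * u) / H u < b) (at_right 0)"
    by (rule eventually_divide_less_if_excess_bounded)
next
  fix b assume "b < p"
  define \<kappa> where "\<kappa> = (p + b) / 2"
  have "\<kappa> < p" "b < \<kappa>" using \<open>b < p\<close> by (auto simp: \<kappa>_def)
  have "eventually (\<lambda>t. - f (c * t) \<le> \<kappa> * - f t) (at_right 0)"
    using order_tendstoD(1)[OF f_ratio \<open>\<kappa> < p\<close>] eventually_at_right_less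
    by eventually_elim (auto simp: less_divide_eq f_pos)
  moreover have "((\<lambda>r. - H r) has_real_derivative - (- f r) / r) (at r)" if "r > 0" for r
    using DERIV_minus[OF H'[OF that]] by simp
  ultimately obtain U where "U > 0"
    and U: "\<And>u. 0 < u \<Longrightarrow> u \<le> U \<Longrightarrow> - H (c * u) - \<kappa> * - H u \<le> - H (c * U) - \<kappa> * - H U"
    using dilation_difference_bounded_at_0[where H = "\<lambda>r. - H r" and f = "\<lambda>r. - f r"] \<open>c > 0\<close>
    by blast
  have "eventually (\<lambda>u. - H (c * u) - (- \<kappa>) * H u \<le> - H (c * U) + \<kappa> * H U) (at_right 0)"
    using eventually_at_right_real[OF \<open>U > 0\<close>] by eventually_elim (use U in auto)
  then have "eventually (\<lambda>u. - H (c * u) / H u < - b) (at_right 0)"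
    by (rule eventually_divide_less_if_excess_bounded[OF H_lim, rotated]) (use \<open>b < \<kappa>\<close> in simp)
  then show "eventually (\<lambda>u. H (c * u) / H u > b) (at_right 0)"
    by eventually_elim simp
qed

lemma antiderivative_not_tendsto_at_0:
  fixes H f :: "real \<Rightarrow> real"
  assumes H': "\<And>r. r > 0 \<Longrightarrow> (H has_real_derivative - f r / r) (at r)"
    and f_pos: "\<And>r. r > 0 \<Longrightarrow> f r > 0" and "c > 1"
    and f_ratio: "((\<lambda>u. f (c * u) / f u) \<longlongrightarrow> q) (at_right 0)" and "q < 1"
  shows "\<not> (H \<longlongrightarrow> L) (at_right 0)"
proof
  assume H_lim: "(H \<longlongrightarrow> L) (at_right 0)"
  define \<kappa> where "\<kappa> = (q + 1) / 2"
  have "q < \<kappa>" "\<kappa> < 1" using \<open>q < 1\<close> by (auto simp: \<kappa>_def)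
  have "eventually (\<lambda>t. f (c * t) \<le> \<kappa> * f t) (at_right 0)"
    using order_tendstoD(2)[OF f_ratio \<open>q < \<kappa>\<close>] eventually_at_right_less
    by eventually_elim (auto simp: divide_less_eq f_pos)
  then obtain U where "U > 0"
    and U: "\<And>u. 0 < u \<Longrightarrow> u \<le> U \<Longrightarrow> H (c * u) - \<kappa> * H u \<le> H (c * U) - \<kappa> * H U"
    using dilation_difference_bounded_at_0[OF H', of c] \<open>c > 1\<close> by auto
  have "((\<lambda>u. H (c * u)) \<longlongrightarrow> L) (at_right 0)"
    using filterlim_compose[OF H_lim filterlim_mult_left_at_right_0, of c] \<open>c > 1\<close> by simp
  then have "((\<lambda>u. H (c * u) - \<kappa> * H u) \<longlongrightarrow> L - \<kappa> * L) (at_right 0)"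
    by (intro tendsto_diff tendsto_mult_left H_lim)
  moreover have "eventually (\<lambda>u. H (c * u) - \<kappa> * H u \<le> H (c * U) - \<kappa> * H U) (at_right 0)"
    using eventually_at_right_real[OF \<open>U > 0\<close>] by eventually_elim (auto intro: U)
  ultimately have "(1 - \<kappa>) * L \<le> H (c * U) - \<kappa> * H U"
    by (subst left_diff_distrib) (rule tendsto_upperbound[OF _ _ trivial_limit_at_right_real], simp_all)
  also have "\<dots> < (1 - \<kappa>) * H U"
    using antiderivative_strict_antimono[OF H' f_pos, of U "c * U"] \<open>U > 0\<close> \<open>c > 1\<close>
    by (simp add: algebra_simps)
  also have "\<dots> \<le> (1 - \<kappa>) * L"
  proof (intro mult_left_mono tendsto_lowerbound[OF H_lim _ trivial_limit_at_right_real])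
    show "eventually (\<lambda>u. H U \<le> H u) (at_right 0)"
      using eventually_at_right_real[OF \<open>U > 0\<close>]
      by eventually_elim (auto intro: less_imp_le antiderivative_strict_antimono[OF H' f_pos])
  qed (use \<open>\<kappa> < 1\<close> in simp)
  finally show False by simp
qed

lemma antimono_tendsto_at_top:
  fixes h :: "real \<Rightarrow> real"
  assumes antimono: "\<And>s t. 0 < s \<Longrightarrow> s \<le> t \<Longrightarrow> h t \<le> h s"
    and bdd: "\<And>t. 0 < t \<Longrightarrow> b \<le> h t"
  obtains L where "(h \<longlongrightarrow> L) at_top"
proof
  have bdd': "bdd_below (h ` {0<..})" using bdd by (intro bdd_belowI[of _ b]) auto
  show "(h \<longlongrightarrow> Inf (h ` {0<..})) at_top"
  proof (rule decreasing_tendsto)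
    show "eventually (\<lambda>t. Inf (h ` {0<..}) \<le> h t) at_top"
      using eventually_gt_at_top[of 0] by eventually_elim (auto intro: cInf_lower bdd')
  next
    fix x assume "Inf (h ` {0<..}) < x"
    then obtain s where "s > 0" "h s < x" using cInf_lessD[of "h ` {0<..}" x] by auto
    show "eventually (\<lambda>t. h t < x) at_top"
      using eventually_ge_at_top[of s]
    proof eventually_elim
      case (elim t)
      with antimono[of s t] \<open>s > 0\<close> \<open>h s < x\<close> show ?case by linarith
    qed
  qed
qed

lemma antimono_tendsto_at_right_0:
  fixes h :: "real \<Rightarrow> real"
  assumes antimono: "\<And>s t. 0 < s \<Longrightarrow> s \<le> t \<Longrightarrow> h t \<le> h s"
  obtains L where "(h \<longlongrightarrow> L) (at_right 0)" | "filterlim h at_top (at_right 0)"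
proof (cases "bdd_above (h ` {0<..})")
  case True
  have "(h \<longlongrightarrow> Sup (h ` {0<..})) (at_right 0)"
  proof (rule increasing_tendsto)
    show "eventually (\<lambda>t. h t \<le> Sup (h ` {0<..})) (at_right 0)"
      using eventually_at_right_less by eventually_elim (auto intro: cSup_upper True)
  next
    fix x assume "x < Sup (h ` {0<..})"
    then obtain s where "s > 0" "x < h s" using less_cSupD[of "h ` {0<..}" x] by auto
    show "eventually (\<lambda>t. x < h t) (at_right 0)"
      using eventually_at_right_real[OF \<open>s > 0\<close>]
    proof eventually_elim
      case (elim t)
      with antimono[of t s] \<open>x < h s\<close> show ?case by auto
    qed
  qed
  then show ?thesis by (rule that)
next
  case False
  have "filterlim h at_top (at_right 0)"
    unfolding filterlim_at_top
  proof
    fix z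
    from False obtain s where "s > 0" "z < h s" by (auto simp: bdd_above_def not_le)
    show "eventually (\<lambda>t. z \<le> h t) (at_right 0)"
      using eventually_at_right_real[OF \<open>s > 0\<close>]
    proof eventually_elim
      case (elim t)
      with antimono[of t s] \<open>z < h s\<close> show ?case by auto
    qed
  qed
  then show ?thesis by (rule that)
qed

lemma dilation_ratio_tendsto_1:
  fixes h :: "real \<Rightarrow> real"
  assumes "(h \<longlongrightarrow> L) F" "L \<noteq> 0" "filterlim (\<lambda>u. c * u) F F"
  shows "((\<lambda>u. h (c * u) / h u) \<longlongrightarrow> 1) F"
  using tendsto_divide[OF filterlim_compose[OF assms(1,3)] assms(1,2)] assms(2) by simp

lemma dilation_exponent_nonpos_if_antimono:
  fixes h :: "real \<Rightarrow> real"
  assumes "F \<noteq> bot" "eventually (\<lambda>u. u > 0) F"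
    and antimono: "\<And>s t. 0 < s \<Longrightarrow> s \<le> t \<Longrightarrow> h t \<le> h s" and h_pos: "\<And>t. 0 < t \<Longrightarrow> h t > 0"
    and ratio: "((\<lambda>u. h (2 * u) / h u) \<longlongrightarrow> 2 powr \<rho>) F"
  shows "\<rho> \<le> 0"
proof -
  have "eventually (\<lambda>u. h (2 * u) / h u \<le> 1) F"
    using assms(2) by eventually_elim (simp add: divide_le_eq h_pos antimono)
  then have "2 powr \<rho> \<le> 1"
    by (rule tendsto_upperbound[OF ratio _ \<open>F \<noteq> bot\<close>])
  then show ?thesis using powr_le_cancel_iff[of 2 \<rho> 0] by simp
qed

lemma antiderivative_dilation_index_at_top:
  fixes H f :: "real \<Rightarrow> real"
  assumes H': "\<And>r. r > 0 \<Longrightarrow> (H has_real_derivative - f r / r) (at r)"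
    and f_pos: "\<And>r. r > 0 \<Longrightarrow> f r > 0" and H_pos: "\<And>r. r > 0 \<Longrightarrow> H r > 0"
    and f_ratio: "\<And>c. c > 0 \<Longrightarrow> ((\<lambda>u. f (c * u) / f u) \<longlongrightarrow> c powr \<rho>) at_top"
    and vanishing: "\<rho> < 0 \<Longrightarrow> (H \<longlongrightarrow> 0) at_top" and "c > 0"
  shows "((\<lambda>u. H (c * u) / H u) \<longlongrightarrow> c powr min 0 \<rho>) at_top"
proof -
  have H_antimono: "H t \<le> H s" if "0 < s" "s \<le> t" for s t
    using antiderivative_strict_antimono[OF H' f_pos, of s t] that by (cases "s = t") auto
  obtain L where H_lim: "(H \<longlongrightarrow> L) at_top"
    by (rule antimono_tendsto_at_top[of H 0]) (auto intro: H_antimono H_pos less_imp_le)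
  show ?thesis
  proof (cases "L = 0")
    case True
    have ratio: "((\<lambda>u. H (c * u) / H u) \<longlongrightarrow> c powr \<rho>) at_top" if "c > 0" for c
      using H' f_pos H_pos H_lim[unfolded True] that f_ratio[OF that]
      by (rule antiderivative_dilation_tendsto_at_top)
    have "\<rho> \<le> 0"
      by (rule dilation_exponent_nonpos_if_antimono[OF _ eventually_gt_at_top H_antimono H_pos ratio])
        simp_all
    with ratio[OF \<open>c > 0\<close>] show ?thesis by simp
  next
    case False
    have "\<rho> \<ge> 0"
    proof (rule ccontr)
      assume "\<not> \<rho> \<ge> 0"
      from tendsto_unique[OF trivial_limit_at_top_linorder H_lim vanishing] this False
      show False by simp
    qed
    have "filterlim (\<lambda>u. c * u) at_top at_top"
      using filterlim_tendsto_pos_mult_at_top[OF tendsto_const \<open>c > 0\<close> filterlim_ident] .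
    then have "((\<lambda>u. H (c * u) / H u) \<longlongrightarrow> 1) at_top"
      by (rule dilation_ratio_tendsto_1[OF H_lim False])
    with \<open>\<rho> \<ge> 0\<close> \<open>c > 0\<close> show ?thesis by simp
  qed
qed

lemma antiderivative_dilation_index_at_0:
  fixes H f :: "real \<Rightarrow> real"
  assumes H': "\<And>r. r > 0 \<Longrightarrow> (H has_real_derivative - f r / r) (at r)"
    and f_pos: "\<And>r. r > 0 \<Longrightarrow> f r > 0" and H_pos: "\<And>r. r > 0 \<Longrightarrow> H r > 0"
    and f_ratio: "\<And>c. c > 0 \<Longrightarrow> ((\<lambda>u. f (c * u) / f u) \<longlongrightarrow> c powr \<rho>) (at_right 0)"
    and "c > 0"
  shows "((\<lambda>u. H (c * u) / H u) \<longlongrightarrow> c powr min 0 \<rho>) (at_right 0)"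
proof -
  have H_antimono: "H t \<le> H s" if "0 < s" "s \<le> t" for s t
    using antiderivative_strict_antimono[OF H' f_pos, of s t] that by (cases "s = t") auto
  show ?thesis
  proof (rule antimono_tendsto_at_right_0[of H])
    show "\<And>s t. 0 < s \<Longrightarrow> s \<le> t \<Longrightarrow> H t \<le> H s" by (rule H_antimono)
  next
    fix L assume H_lim: "(H \<longlongrightarrow> L) (at_right 0)"
    have "eventually (\<lambda>u. H 1 \<le> H u) (at_right 0)"
      using eventually_at_right_real[OF zero_less_one] by eventually_elim (auto intro: H_antimono)
    then have "H 1 \<le> L" by (rule tendsto_lowerbound[OF H_lim _ trivial_limit_at_right_real])
    with H_pos[of 1] have "L \<noteq> 0" by simp
    have "\<rho> \<ge> 0"
    proof (rule ccontr)
      assume "\<not> \<rho> \<ge> 0"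
      then have "2 powr \<rho> < 1" by (intro powr_less_one) auto
      from antiderivative_not_tendsto_at_0[OF H' f_pos _ f_ratio this] H_lim show False by simp
    qed
    have "((\<lambda>u. H (c * u) / H u) \<longlongrightarrow> 1) (at_right 0)"
      using H_lim \<open>L \<noteq> 0\<close> filterlim_mult_left_at_right_0[OF \<open>c > 0\<close>] by (rule dilation_ratio_tendsto_1)
    with \<open>\<rho> \<ge> 0\<close> \<open>c > 0\<close> show ?thesis by simp
  next
    assume H_lim: "filterlim H at_top (at_right 0)"
    have ratio: "((\<lambda>u. H (c * u) / H u) \<longlongrightarrow> c powr \<rho>) (at_right 0)" if "c > 0" for c
      using H' f_pos H_lim that f_ratio[OF that] by (rule antiderivative_dilation_tendsto_at_0)
    have "\<rho> \<le> 0"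
      by (rule dilation_exponent_nonpos_if_antimono[OF _ eventually_at_right_less H_antimono H_pos ratio])
        simp_all
    with ratio[OF \<open>c > 0\<close>] show ?thesis by simp
  qed
qed

definition square_defect :: "(real \<Rightarrow> real) \<Rightarrow> real \<Rightarrow> real" where
  "square_defect \<psi> r = \<psi> r - r / 2 * deriv \<psi> r"

lemma has_real_derivative_div_square:
  assumes "\<psi> differentiable (at r)" "r > 0"
  shows "((\<lambda>r. \<psi> r / r^2) has_real_derivative - (2 * (square_defect \<psi> r / r^2)) / r) (at r)"
proof -
  have "(\<psi> has_real_derivative deriv \<psi> r) (at r)"
    using assms(1) by (simp add: DERIV_deriv_iff_real_differentiable)
  then have "((\<lambda>r. \<psi> r / r^2) has_real_derivative
      (deriv \<psi> r * r^2 - \<psi> r * (2 * r)) / (r^2 * r^2)) (at r)"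
    using DERIV_divide[OF _ DERIV_pow[of 2 r]] \<open>r > 0\<close> by simp
  moreover have "(deriv \<psi> r * r^2 - \<psi> r * (2 * r)) / (r^2 * r^2)
      = - (2 * (square_defect \<psi> r / r^2)) / r"
    using \<open>r > 0\<close> by (simp add: square_defect_def field_simps power2_eq_square)
  ultimately show ?thesis by simp
qed

lemma dilation_ratio_div_square_iff:
  fixes g :: "real \<Rightarrow> real"
  assumes "eventually (\<lambda>u. u > 0) F" "c > 0"
  shows "((\<lambda>u. (g (c * u) / (c * u)^2) / (g u / u^2)) \<longlongrightarrow> c powr (\<alpha> - 2)) F
    \<longleftrightarrow> ((\<lambda>u. g (c * u) / g u) \<longlongrightarrow> c powr \<alpha>) F"
proof -
  have "eventually (\<lambda>u. (g (c * u) / (c * u)^2) / (g u / u^2) = g (c * u) / g u * c powr -2) F"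
    using assms(1) by eventually_elim
      (use \<open>c > 0\<close> in \<open>simp add: powr_minus_divide powr_numeral power_mult_distrib\<close>)
  then have "((\<lambda>u. (g (c * u) / (c * u)^2) / (g u / u^2)) \<longlongrightarrow> c powr \<alpha> * c powr -2) F
      \<longleftrightarrow> ((\<lambda>u. g (c * u) / g u * c powr -2) \<longlongrightarrow> c powr \<alpha> * c powr -2) F"
    by (rule tendsto_cong)
  also have "\<dots> \<longleftrightarrow> ((\<lambda>u. g (c * u) / g u) \<longlongrightarrow> c powr \<alpha>) F"
    using \<open>c > 0\<close> by (intro tendsto_mult_right_iff) simp
  finally show ?thesis
    by (simp add: powr_diff powr_minus_divide)
qed

lemma div_square_pos:
  assumes diff: "\<And>r. r > 0 \<Longrightarrow> \<psi> differentiable (at r)"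
    and defect_pos: "\<And>r. r > 0 \<Longrightarrow> square_defect \<psi> r > 0"
    and nonneg: "\<And>r. r > 0 \<Longrightarrow> \<psi> r \<ge> 0" and "t > 0"
  shows "\<psi> t / t^2 > 0"
proof -
  have "\<psi> (t + 1) / (t + 1)^2 < \<psi> t / t^2"
  proof (rule antiderivative_strict_antimono[where H = "\<lambda>r. \<psi> r / r^2"
        and f = "\<lambda>r. 2 * (square_defect \<psi> r / r^2)"])
    show "((\<lambda>r. \<psi> r / r^2) has_real_derivative - (2 * (square_defect \<psi> r / r^2)) / r) (at r)"
      if "r > 0" for r
      using has_real_derivative_div_square[OF diff[OF that] that] .
  qed (use defect_pos \<open>t > 0\<close> in auto)
  moreover have "\<psi> (t + 1) / (t + 1)^2 \<ge> 0" using nonneg[of "t + 1"] \<open>t > 0\<close> by simp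
  ultimately show ?thesis by linarith
qed

lemma regvar_at_top_of_square_defect:
  fixes \<psi> :: "real \<Rightarrow> real"
  assumes diff: "\<And>r. r > 0 \<Longrightarrow> \<psi> differentiable (at r)"
    and nonneg: "\<And>r. r > 0 \<Longrightarrow> \<psi> r \<ge> 0"
    and regvar: "regvar_at_top (square_defect \<psi>) (2 * \<gamma>)"
    and subquadratic: "\<gamma> < 1 \<Longrightarrow> ((\<lambda>r. \<psi> r / r^2) \<longlongrightarrow> 0) at_top"
  shows "regvar_at_top \<psi> (2 * min 1 \<gamma>)"
proof -
  have defect_pos: "\<And>r. r > 0 \<Longrightarrow> square_defect \<psi> r > 0"
    using regvar by (simp add: regvar_at_top_def)
  have h_pos: "\<And>t. t > 0 \<Longrightarrow> \<psi> t / t^2 > 0"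
    by (rule div_square_pos[OF diff defect_pos nonneg])
  have f_ratio: "((\<lambda>u. 2 * (square_defect \<psi> (c * u) / (c * u)^2) / (2 * (square_defect \<psi> u / u^2)))
      \<longlongrightarrow> c powr (2 * \<gamma> - 2)) at_top" if "c > 0" for c
    using regvar that dilation_ratio_div_square_iff[OF eventually_gt_at_top that]
    by (simp add: regvar_at_top_def)
  have "min 0 (2 * \<gamma> - 2) = 2 * min 1 \<gamma> - 2" by (simp add: min_def)
  then have h_ratio: "((\<lambda>u. (\<psi> (c * u) / (c * u)^2) / (\<psi> u / u^2))
      \<longlongrightarrow> c powr (2 * min 1 \<gamma> - 2)) at_top" if "c > 0" for c
    using antiderivative_dilation_index_at_top[OF has_real_derivative_div_square[OF diff] _ h_pos f_ratio
        subquadratic that] defect_pos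
    by (simp add: \<open>c > 0\<close>)
  show ?thesis
    using h_pos dilation_ratio_div_square_iff[OF eventually_gt_at_top] h_ratio
    by (auto simp: regvar_at_top_def zero_less_divide_iff)
qed

lemma regvar_at_0_of_square_defect:
  fixes \<psi> :: "real \<Rightarrow> real"
  assumes diff: "\<And>r. r > 0 \<Longrightarrow> \<psi> differentiable (at r)"
    and nonneg: "\<And>r. r > 0 \<Longrightarrow> \<psi> r \<ge> 0"
    and regvar: "regvar_at_0 (square_defect \<psi>) (2 * \<gamma>)"
  shows "regvar_at_0 \<psi> (2 * min 1 \<gamma>)"
proof -
  have defect_pos: "\<And>r. r > 0 \<Longrightarrow> square_defect \<psi> r > 0"
    using regvar by (simp add: regvar_at_0_def)
  have h_pos: "\<And>t. t > 0 \<Longrightarrow> \<psi> t / t^2 > 0"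
    by (rule div_square_pos[OF diff defect_pos nonneg])
  have f_ratio: "((\<lambda>u. 2 * (square_defect \<psi> (c * u) / (c * u)^2) / (2 * (square_defect \<psi> u / u^2)))
      \<longlongrightarrow> c powr (2 * \<gamma> - 2)) (at_right 0)" if "c > 0" for c
    using regvar that dilation_ratio_div_square_iff[OF eventually_at_right_less that]
    by (simp add: regvar_at_0_def)
  have "min 0 (2 * \<gamma> - 2) = 2 * min 1 \<gamma> - 2" by (simp add: min_def)
  then have h_ratio: "((\<lambda>u. (\<psi> (c * u) / (c * u)^2) / (\<psi> u / u^2))
      \<longlongrightarrow> c powr (2 * min 1 \<gamma> - 2)) (at_right 0)" if "c > 0" for c
    using antiderivative_dilation_index_at_0[OF has_real_derivative_div_square[OF diff] _ h_pos f_ratio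
        that] defect_pos
    by (simp add: \<open>c > 0\<close>)
  show ?thesis
    using h_pos dilation_ratio_div_square_iff[OF eventually_at_right_less] h_ratio
    by (auto simp: regvar_at_0_def zero_less_divide_iff)
qed

lemma one_minus_cos_le: "1 - cos (u::real) \<le> u^2 / 2"
proof -
  have "\<bar>sin (u / 2)\<bar> \<le> \<bar>u / 2\<bar>" by (rule abs_sin_x_le_abs_x)
  then have "sin (u / 2)^2 \<le> (u / 2)^2" by (metis abs_ge_zero power2_abs power_mono)
  moreover have "cos u = 1 - 2 * sin (u / 2)^2" using cos_double_sin[of "u / 2"] by simp
  ultimately show ?thesis by (simp add: power_divide)
qed

lemma one_minus_cos_dilation_le:
  fixes r t :: real
  assumes "r \<ge> 1"
  shows "(1 - cos (r * t)) / r^2 \<le> 2 * min 1 (t^2)"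
proof -
  have "0 \<le> 1 - cos (r * t)" "1 - cos (r * t) \<le> 2" using cos_ge_minus_one[of "r * t"] by auto
  have "1 \<le> r^2" using \<open>r \<ge> 1\<close> by (simp add: one_le_power)
  have "(1 - cos (r * t)) / r^2 \<le> 1 - cos (r * t)"
    using mult_left_mono[OF \<open>1 \<le> r^2\<close> \<open>0 \<le> 1 - cos (r * t)\<close>] \<open>1 \<le> r^2\<close>
    by (simp add: divide_le_eq)
  then have "(1 - cos (r * t)) / r^2 \<le> 2" using \<open>1 - cos (r * t) \<le> 2\<close> by linarith
  moreover have "(1 - cos (r * t)) / r^2 \<le> t^2 / 2"
  proof -
    have "(1 - cos (r * t)) / r^2 \<le> (r * t)^2 / 2 / r^2"
      by (intro divide_right_mono one_minus_cos_le) simp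
    also have "\<dots> = t^2 / 2" using \<open>r \<ge> 1\<close> by (simp add: power_mult_distrib)
    finally show ?thesis .
  qed
  moreover have "\<And>x s :: real. x \<le> 2 \<Longrightarrow> x \<le> s / 2 \<Longrightarrow> 0 \<le> s \<Longrightarrow> x \<le> 2 * min 1 s"
    by (auto simp: min_def)
  ultimately show ?thesis by simp
qed

lemma integral_one_minus_cos_div_square_tendsto_0:
  fixes \<nu> :: "'a::euclidean_space measure" and v :: 'a
  assumes sets: "sets \<nu> = sets borel"
    and levy: "(\<integral>\<^sup>+ x. ennreal (min 1 (norm x ^ 2)) \<partial>\<nu>) < \<infinity>" and "norm v = 1"
  shows "((\<lambda>r. (\<integral>x. (1 - cos ((r *\<^sub>R v) \<bullet> x)) \<partial>\<nu>) / r^2) \<longlongrightarrow> 0) at_top"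
proof -
  have measurable: "borel_measurable \<nu> = borel_measurable borel"
    by (rule measurable_cong_sets[OF sets refl])
  have "integrable \<nu> (\<lambda>x. min 1 (norm x ^ 2))"
    using levy by (intro integrableI_bounded) (auto simp: measurable)
  then have "((\<lambda>r. \<integral>x. (1 - cos (r * (v \<bullet> x))) / r^2 \<partial>\<nu>) \<longlongrightarrow> (\<integral>x. 0 \<partial>\<nu>)) at_top"
  proof (intro integral_dominated_convergence_at_top[where w = "\<lambda>x. 2 * min 1 (norm x ^ 2)"]
      integrable_mult_right AE_I2)
    show "(\<lambda>x. (1 - cos (r * (v \<bullet> x))) / r^2) \<in> borel_measurable \<nu>" for r
      unfolding measurable by measurable
    show "((\<lambda>r. (1 - cos (r * (v \<bullet> x))) / r^2) \<longlongrightarrow> 0) at_top" for x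
    proof (rule tendsto_0_le[where K = 1])
      show "((\<lambda>r::real. 2 / r^2) \<longlongrightarrow> 0) at_top" by real_asymp
      show "eventually (\<lambda>r. norm ((1 - cos (r * (v \<bullet> x))) / r^2) \<le> norm (2 / r^2) * 1) at_top"
        using eventually_gt_at_top[of 0]
        by eventually_elim (auto simp: divide_right_mono cos_le_one[THEN diff_ge_0_iff_ge[THEN iffD2]])
    qed
    have min_le: "min 1 ((v \<bullet> x)^2) \<le> min 1 (norm x ^ 2)" for x
      using Cauchy_Schwarz_ineq2[of v x] \<open>norm v = 1\<close>
      by (intro min.mono order_refl) (metis abs_ge_zero mult_1 power2_abs power_mono)
    show "eventually (\<lambda>r. AE x in \<nu>. norm ((1 - cos (r * (v \<bullet> x))) / r^2) \<le> 2 * min 1 (norm x ^ 2)) at_top"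
      using eventually_ge_at_top[of 1]
    proof (eventually_elim, intro AE_I2)
      fix r :: real and x assume "r \<ge> 1"
      have "norm ((1 - cos (r * (v \<bullet> x))) / r^2) = (1 - cos (r * (v \<bullet> x))) / r^2"
        by (simp add: cos_le_one)
      also have "\<dots> \<le> 2 * min 1 ((v \<bullet> x)^2)" by (rule one_minus_cos_dilation_le[OF \<open>r \<ge> 1\<close>])
      also have "\<dots> \<le> 2 * min 1 (norm x ^ 2)" using min_le[of x] by simp
      finally show "norm ((1 - cos (r * (v \<bullet> x))) / r^2) \<le> 2 * min 1 (norm x ^ 2)" .
    qed
  qed simp
  then show ?thesis
    by simp
qed

theorem proposition3p7:
  fixes \<nu> :: "(real ^ 'n) measure" and a \<gamma> :: real and \<psi> :: "real \<Rightarrow> real"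
  assumes nu: "isotropic_levy_measure \<nu>"
    and a: "a \<ge> 0"
    and exponent: "\<And>\<xi> :: real ^ 'n.
        \<psi> (norm \<xi>) = a * norm \<xi> ^ 2 + (\<integral>x. (1 - cos (\<xi> \<bullet> x)) \<partial>\<nu>)"
    and diff: "\<And>r. r > 0 \<Longrightarrow> \<psi> differentiable (at r)"
    and gamma: "\<gamma> \<ge> 0"
  defines "g \<equiv> (\<lambda>r. \<psi> r - r / 2 * deriv \<psi> r)"
  shows "(regvar_at_0 g (2 * \<gamma>) \<longrightarrow> regvar_at_0 \<psi> (2 * min 1 \<gamma>)) \<and>
         (regvar_at_top g (2 * \<gamma>) \<and> (2 * \<gamma> < 2 \<longrightarrow> a = 0)
            \<longrightarrow> regvar_at_top \<psi> (2 * min 1 \<gamma>))"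
proof -
  obtain v :: "real ^ 'n" where "norm v = 1" using vector_choose_size[of 1] by auto
  have \<psi>_radial: "\<psi> r = a * r^2 + (\<integral>x. (1 - cos ((r *\<^sub>R v) \<bullet> x)) \<partial>\<nu>)" if "r \<ge> 0" for r
    using exponent[of "r *\<^sub>R v"] \<open>norm v = 1\<close> that by simp
  have nonneg: "\<psi> r \<ge> 0" if "r > 0" for r
    using \<psi>_radial[of r] that a by (simp add: Bochner_Integration.integral_nonneg cos_le_one)
  have g: "g = square_defect \<psi>" by (simp add: g_def square_defect_def fun_eq_iff)
  have levy: "sets \<nu> = sets borel" "(\<integral>\<^sup>+ x. ennreal (min 1 (norm x ^ 2)) \<partial>\<nu>) < \<infinity>"
    using nu by (auto simp: isotropic_levy_measure_def)
  have "((\<lambda>r. \<psi> r / r^2) \<longlongrightarrow> 0) at_top" if "a = 0"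
  proof -
    have "eventually (\<lambda>r. (\<integral>x. (1 - cos ((r *\<^sub>R v) \<bullet> x)) \<partial>\<nu>) / r^2 = \<psi> r / r^2) at_top"
      using eventually_gt_at_top[of 0] by eventually_elim (simp add: \<psi>_radial \<open>a = 0\<close>)
    with integral_one_minus_cos_div_square_tendsto_0[OF levy \<open>norm v = 1\<close>] show ?thesis
      by (rule tendsto_cong[THEN iffD1, rotated])
  qed
  then show ?thesis
    using regvar_at_0_of_square_defect[OF diff nonneg] regvar_at_top_of_square_defect[OF diff nonneg]
    by (auto simp: g)
qed

end
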